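(* Let $D\in\mathbb{D}^n_+$, $W\in\mathbb{R}^{n\times n}$, $u\in\mathbb{R}^n$, and define $f_1(x)=-Dx+[Wx+u]_0^1$. Suppose $W-D$ is Lyapunov diagonally stable. Then there exists a unique $x^\star\in\mathbb{R}^n$ such that $f_1(x^\star)=0$. In particular, for each $u$, the linear-threshold network $\dot x=-Dx+[Wx+u]_0^1$ admits a unique equilibrium.
   Context: $\mathbb{D}^n_+$ is the set of $n\times n$ diagonal matrices with positive diagonal entries. $[z]_0^1=\max(0,\min(z,1))$, applied elementwise to vectors. A matrix $M$ is Lyapunov diagonally stable if $M^\top\Lambda+\Lambda M\prec0$ for some $\Lambda\in\mathbb{D}^n_+$. *)

theory Defs
  imports "HOL-Analysis.Analysis"
begin

definition pos_diag :: "real^'n^'n \<Rightarrow> bool" where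
  "pos_diag D \<longleftrightarrow> (\<forall>i j. i \<noteq> j \<longrightarrow> D $ i $ j = 0) \<and> (\<forall>i. D $ i $ i > 0)"

definition neg_def :: "real^'n^'n \<Rightarrow> bool" where
  "neg_def M \<longleftrightarrow> transpose M = M \<and> (\<forall>x. x \<noteq> 0 \<longrightarrow> x \<bullet> (M *v x) < 0)"

definition lyap_diag_stable :: "real^'n^'n \<Rightarrow> bool" where
  "lyap_diag_stable M \<longleftrightarrow>
     (\<exists>\<Lambda>. pos_diag \<Lambda> \<and> neg_def (transpose M ** \<Lambda> + \<Lambda> ** M))"

definition clip01 :: "real^'n \<Rightarrow> real^'n" where
  "clip01 z = (\<chi> i. max 0 (min (z $ i) 1))"

end

theory Submission
  imports Defs
begin

text \<open>Existence comes from Brouwer's theorem: a solution of \<open>D x = [W x + u]\<^sub>0\<^sup>1\<close> is a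
  fixed point of \<open>x \<mapsto> D\<^sup>-\<^sup>1 [W x + u]\<^sub>0\<^sup>1\<close>, which maps the box \<open>\<Prod>\<^sub>i [0, 1/D\<^sub>i\<^sub>i]\<close> into itself.
  For uniqueness, let \<open>x, y\<close> be two equilibria, \<open>d = x - y\<close>, and \<open>c = D d\<close> the difference of
  the clipped inputs. Since clipping is monotone and nonexpansive, \<open>c\<^sub>i\<close> lies between
  \<open>0\<close> and \<open>(W d)\<^sub>i\<close>, so \<open>c\<^sub>i ((W - D) d)\<^sub>i = c\<^sub>i ((W d)\<^sub>i - c\<^sub>i) \<ge> 0\<close>. For the diagonal
  Lyapunov weight \<open>\<Lambda>\<close> this gives \<open>(\<Lambda> d) \<bullet> ((W - D) d) \<ge> 0\<close>, whereas Lyapunov diagonal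
  stability makes this quantity negative unless \<open>d = 0\<close>.\<close>

lemma pos_diag_mult_vec_nth:
  assumes "pos_diag D"
  shows "(D *v x) $ i = D $ i $ i * x $ i"
proof -
  have "(D *v x) $ i = (\<Sum>j\<in>UNIV. if j = i then D $ i $ i * x $ i else 0)"
    unfolding matrix_vector_mult_def
    by (rule vec_lambda_beta[THEN trans], rule sum.cong) (use assms in \<open>auto simp: pos_diag_def\<close>)
  then show ?thesis by simp
qed

lemma pos_diag_transpose:
  assumes "pos_diag D"
  shows "transpose D = D"
proof -
  have "D $ j $ i = D $ i $ j" for i j
    using assms by (cases "i = j") (auto simp: pos_diag_def)
  then show ?thesis by (simp add: transpose_def vec_eq_iff)
qed

lemma inner_transpose_mult_vec:
  fixes x y :: "real^'n"
  shows "x \<bullet> (transpose A *v y) = (A *v x) \<bullet> y"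
proof -
  have "x \<bullet> (transpose A *v y) = (y v* A) \<bullet> x"
    by (simp add: inner_commute)
  also have "\<dots> = y \<bullet> (A *v x)"
    by (rule dot_lmul_matrix)
  finally show ?thesis
    by (simp add: inner_commute)
qed

lemma quadratic_form_lyapunov_sum:
  fixes A L :: "real^'n^'n"
  assumes "transpose L = L"
  shows "x \<bullet> ((transpose A ** L + L ** A) *v x) = 2 * ((L *v x) \<bullet> (A *v x))"
proof -
  have "x \<bullet> (transpose A *v (L *v x)) = (L *v x) \<bullet> (A *v x)"
    unfolding inner_transpose_mult_vec by (rule inner_commute)
  moreover have "x \<bullet> (L *v (A *v x)) = (L *v x) \<bullet> (A *v x)"
    using inner_transpose_mult_vec[of x L "A *v x"] by (simp only: assms)
  ultimately show ?thesis
    by (simp add: matrix_vector_mult_add_rdistrib matrix_vector_mul_assoc[symmetric]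
        inner_add_right)
qed

lemma lyap_diag_stableE:
  assumes "lyap_diag_stable A"
  obtains L where "pos_diag L" "\<And>x. x \<noteq> 0 \<Longrightarrow> (L *v x) \<bullet> (A *v x) < 0"
proof -
  obtain L where L: "pos_diag L" "neg_def (transpose A ** L + L ** A)"
    using assms by (auto simp: lyap_diag_stable_def)
  show thesis
  proof (rule that[OF L(1)])
    fix x :: "real^'a" assume "x \<noteq> 0"
    then have "x \<bullet> ((transpose A ** L + L ** A) *v x) < 0"
      using L(2) by (simp add: neg_def_def)
    then show "(L *v x) \<bullet> (A *v x) < 0"
      using quadratic_form_lyapunov_sum[OF pos_diag_transpose[OF L(1)], of x A] by simp
  qed
qed

lemma clip_diff_mult_nonneg:
  fixes p q :: real
  shows "0 \<le> (max 0 (min p 1) - max 0 (min q 1)) * ((p - q) - (max 0 (min p 1) - max 0 (min q 1)))"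
proof (cases "p \<le> q")
  case True
  then show ?thesis by (intro mult_nonpos_nonpos) auto
next
  case False
  then show ?thesis by (intro mult_nonneg_nonneg) auto
qed

lemma clip01_diff_mult_nonneg:
  "0 \<le> (clip01 a - clip01 b) $ i * ((a - b) $ i - (clip01 a - clip01 b) $ i)"
  unfolding clip01_def vector_minus_component vec_lambda_beta
  by (rule clip_diff_mult_nonneg)

lemma bounded_continuous_diag_equation_solvable:
  fixes f :: "real^'n \<Rightarrow> real^'n"
  assumes "pos_diag D" "continuous_on UNIV f" "\<And>x i. 0 \<le> f x $ i \<and> f x $ i \<le> 1"
  shows "\<exists>x. D *v x = f x"
proof -
  have D_pos: "D $ i $ i > 0" for i
    using assms(1) by (simp add: pos_diag_def)
  define S where "S = cbox (0::real^'n) (\<chi> i. 1 / D $ i $ i)"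
  define g where "g x = (\<chi> i. f x $ i / D $ i $ i)" for x
  obtain x where "g x = x"
  proof (rule brouwer)
    show "compact S" "convex S"
      unfolding S_def by simp_all
    have "0 \<in> S"
      unfolding S_def by (simp add: mem_box_cart D_pos less_imp_le)
    then show "S \<noteq> {}" by blast
    show "continuous_on S g"
      unfolding g_def
      by (intro continuous_on_vec_lambda continuous_intros continuous_on_subset[OF assms(2)])
        (use D_pos in \<open>auto simp: less_le\<close>)
    show "g \<in> S \<rightarrow> S"
      unfolding g_def S_def using D_pos assms(3)
      by (auto simp: mem_box_cart less_imp_le intro!: divide_right_mono divide_nonneg_pos)
  qed
  have "D *v x = f x"
  proof (rule vec_eq_iff[THEN iffD2], rule allI)
    fix i
    have "f x $ i / D $ i $ i = x $ i"
      using \<open>g x = x\<close> unfolding g_def by (metis vec_lambda_beta)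
    then show "(D *v x) $ i = f x $ i"
      using D_pos[of i] by (simp add: pos_diag_mult_vec_nth[OF assms(1)] field_simps)
  qed
  then show ?thesis ..
qed

lemma diag_clip_equilibria_inner_nonneg:
  assumes "pos_diag D" "pos_diag L"
    and x: "D *v x = clip01 (W *v x + u)" and y: "D *v y = clip01 (W *v y + u)"
  shows "(L *v (x - y)) \<bullet> ((W - D) *v (x - y)) \<ge> 0"
proof -
  define d where "d = x - y"
  define a where "a = W *v x + u"
  define b where "b = W *v y + u"
  define c where "c = clip01 a - clip01 b"
  have Dd: "D *v d = c"
    using x y by (simp add: d_def a_def b_def c_def matrix_vector_mult_diff_distrib)
  have "W *v d = a - b"
    by (simp add: d_def a_def b_def matrix_vector_mult_diff_distrib)
  then have Ad: "(W - D) *v d = (a - b) - c"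
    by (simp add: matrix_vector_mult_diff_rdistrib Dd)
  have "(L *v d) \<bullet> ((W - D) *v d) \<ge> 0"
    unfolding inner_vec_def inner_real_def
  proof (rule sum_nonneg)
    fix i
    have D_pos: "D $ i $ i > 0" and L_pos: "L $ i $ i > 0"
      using assms(1,2) by (simp_all add: pos_diag_def)
    have "(L *v d) $ i = L $ i $ i / D $ i $ i * c $ i"
      using arg_cong[OF Dd, of "\<lambda>v. v $ i"] D_pos
      by (simp add: pos_diag_mult_vec_nth[OF assms(1)] pos_diag_mult_vec_nth[OF assms(2)]
          field_simps)
    then have "(L *v d) $ i * ((W - D) *v d) $ i
        = L $ i $ i / D $ i $ i * (c $ i * ((a - b) $ i - c $ i))"
      by (simp add: Ad)
    also have "\<dots> \<ge> 0"
      using D_pos L_pos clip01_diff_mult_nonneg[of a b i] by (simp add: c_def)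
    finally show "(L *v d) $ i * ((W - D) *v d) $ i \<ge> 0" .
  qed
  then show ?thesis by (simp add: d_def)
qed

lemma diag_clip_equilibrium_unique:
  assumes "pos_diag D" "lyap_diag_stable (W - D)"
    and "D *v x = clip01 (W *v x + u)" "D *v y = clip01 (W *v y + u)"
  shows "x = y"
proof -
  obtain L where L: "pos_diag L" "\<And>d. d \<noteq> 0 \<Longrightarrow> (L *v d) \<bullet> ((W - D) *v d) < 0"
    using lyap_diag_stableE[OF assms(2)] by blast
  have "(L *v (x - y)) \<bullet> ((W - D) *v (x - y)) \<ge> 0"
    using diag_clip_equilibria_inner_nonneg[OF assms(1) L(1) assms(3,4)] .
  then have "x - y = 0"
    using L(2)[of "x - y"] by linarith
  then show ?thesis by simp
qed

theorem proposition1: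
  fixes D W :: "real^'n^'n" and u :: "real^'n"
  assumes "pos_diag D"
    and "lyap_diag_stable (W - D)"
  shows "\<exists>!x. - (D *v x) + clip01 (W *v x + u) = 0"
proof -
  have equilibrium_iff: "- (D *v x) + clip01 (W *v x + u) = 0 \<longleftrightarrow> D *v x = clip01 (W *v x + u)"
    for x by (auto simp: algebra_simps)
  have "continuous_on UNIV (\<lambda>x. clip01 (W *v x + u))"
    unfolding clip01_def
    by (intro continuous_intros continuous_on_vec_lambda linear_continuous_on
        matrix_vector_mul_linear)
  moreover have "0 \<le> clip01 z $ i \<and> clip01 z $ i \<le> 1" for z :: "real^'n" and i
    by (simp add: clip01_def)
  ultimately obtain x where "D *v x = clip01 (W *v x + u)"
    using bounded_continuous_diag_equation_solvable[OF assms(1)] by blast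
  then show ?thesis
    unfolding equilibrium_iff using diag_clip_equilibrium_unique[OF assms] by blast
qed

end
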